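(* Let $a\in(0,1)$ and let $h:\mathbb R_+\to\mathbb R_+$ be differentiable, bounded and bounded away from $0$ on $(0,\infty)$, with $h_t=h_{at}$ for all $t>0$. If $\zeta>-1$, then $$\int_1^ts^\zeta h_s\,ds\sim t^{\zeta+1}\tilde h_t\quad\text{as }t\to\infty,\qquad\text{where}\quad\tilde h_t=-\log a\cdot\int_0^\infty a^{r(1+\zeta)}h_{a^rt}\,dr,$$ and $f\sim g$ means $f_t/g_t\to1$. *)

theory Defs
  imports "HOL-Analysis.Analysis"
begin

definition htilde :: "real \<Rightarrow> real \<Rightarrow> (real \<Rightarrow> real) \<Rightarrow> real \<Rightarrow> real" where
  "htilde a \<zeta> h t = - ln a * integral {0..} (\<lambda>r. a powr (r * (1 + \<zeta>)) * h (a powr r * t))"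

end

theory Submission
  imports Defs
begin

text \<open>Substituting \<open>s = a\<^sup>r t\<close> in the integral defining \<open>htilde\<close> gives the exact identity
  \<open>t\<^bsup>\<zeta>+1\<^esup> htilde\<^sub>t = \<integral>\<^sub>0\<^sup>t s\<^sup>\<zeta> h\<^sub>s ds\<close> for every continuous \<open>h\<close> with \<open>0 \<le> h \<le> C\<close>. The numerator \<open>\<integral>\<^sub>1\<^sup>t\<close> differs from this by the constant \<open>\<integral>\<^sub>0\<^sup>1\<close>,
  finite because \<open>\<zeta> > -1\<close>, and tends to infinity because \<open>h\<close> is bounded away from \<open>0\<close>;
  so the ratio tends to \<open>1\<close>.\<close>

lemma powr_times_bounded_integrable_from_0:
  fixes h :: "real \<Rightarrow> real"
  assumes h: "continuous_on {0<..} h" and C: "\<forall>s>0. \<bar>h s\<bar> \<le> C"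
    and \<zeta>: "\<zeta> > -1" and x: "0 \<le> x"
  shows "(\<lambda>s. s powr \<zeta> * h s) integrable_on {0..x}"
proof -
  have "(\<lambda>s. s powr \<zeta> * h s) integrable_on {0<..<x}"
  proof (rule measurable_bounded_by_integrable_imp_integrable)
    have "continuous_on {0<..<x} (\<lambda>s. s powr \<zeta> * h s)"
      using h by (auto intro!: continuous_intros elim: continuous_on_subset)
    then show "(\<lambda>s. s powr \<zeta> * h s) \<in> borel_measurable (lebesgue_on {0<..<x})"
      by (rule continuous_imp_measurable_on_sets_lebesgue) auto
    have "((\<lambda>s. C * s powr \<zeta>) has_integral C * (x powr (\<zeta>+1) / (\<zeta>+1))) {0..x}"
      using has_integral_powr_from_0[OF \<zeta> x] by (rule has_integral_mult_right)
    then show "(\<lambda>s. C * s powr \<zeta>) integrable_on {0<..<x}"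
      using integrable_on_Icc_iff_Ioo by blast
    show "norm (s powr \<zeta> * h s) \<le> C * s powr \<zeta>" if "s \<in> {0<..<x}" for s
      using C that by (simp add: abs_mult mult.commute mult_left_mono)
  qed auto
  then show ?thesis
    using integrable_on_Icc_iff_Ioo by blast
qed

lemma tendsto_powr_base_less_1_at_top:
  fixes a :: real
  assumes "0 < a" "a < 1"
  shows "((\<lambda>y. a powr y) \<longlongrightarrow> 0) at_top"
proof -
  have "filterlim (\<lambda>y. ln a * y) at_bot at_top"
    using assms by (intro filterlim_tendsto_neg_mult_at_bot[OF tendsto_const]) (auto simp: filterlim_ident)
  then have "((\<lambda>y. exp (ln a * y)) \<longlongrightarrow> 0) at_top"
    using exp_at_bot filterlim_compose by blast
  then show ?thesis
    using assms by (simp add: powr_def mult.commute)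
qed

lemma has_integral_powr_substitution:
  fixes g :: "real \<Rightarrow> real"
  assumes a: "0 < a" "a < 1" and t: "0 < t" and y: "0 \<le> y"
    and g: "continuous_on {0<..} g"
  shows "((\<lambda>r. a powr r * t * g (a powr r * t)) has_integral integral {a powr y * t..t} g / - ln a) {0..y}"
proof -
  have below_t: "a powr y * t \<le> t"
    using a t y by (simp add: powr_le1)
  have "((\<lambda>r. (a powr r * ln a * t) *\<^sub>R g (a powr r * t)) has_integral
      integral {a powr 0 * t..a powr y * t} g - integral {a powr y * t..a powr 0 * t} g) {0..y}"
  proof (rule has_integral_substitution_general[where s = "{}" and c = "a powr y * t" and d = t
        and f = g and g = "\<lambda>r. a powr r * t" and g' = "\<lambda>r. a powr r * ln a * t"])
    have "a powr y * t \<le> a powr r * t \<and> a powr r * t \<le> t" if "r \<in> {0..y}" for r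
      using a t that powr_mono'[of r y a] powr_le1[of r a] by simp
    then show "(\<lambda>r. a powr r * t) ` {0..y} \<subseteq> {a powr y * t..t}"
      by auto
    have "0 < a powr y * t"
      using a t by simp
    then show "continuous_on {a powr y * t..t} g"
      by (intro continuous_on_subset[OF g]) auto
    show "continuous_on {0..y} (\<lambda>r. a powr r * t)"
      using a by (intro continuous_intros) auto
    show "((\<lambda>r. a powr r * t) has_field_derivative a powr r * ln a * t) (at r within {0..y})" for r
    proof -
      have "((\<lambda>r. a powr r) has_real_derivative a powr r * ln a) (at r)"
        using DERIV_powr[OF DERIV_const _ DERIV_ident, of a] a by simp
      then show ?thesis
        by (rule has_field_derivative_at_within[OF DERIV_cmult_right])
    qed
  qed (use y in auto)
  then have "((\<lambda>r. (a powr r * ln a * t) *\<^sub>R g (a powr r * t)) has_integral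
      integral {t..a powr y * t} g - integral {a powr y * t..t} g) {0..y}"
    using a by simp
  moreover have "integral {t..a powr y * t} g = 0"
    using below_t by (cases "a powr y * t = t") auto
  ultimately have "((\<lambda>r. (a powr r * t * g (a powr r * t)) * ln a) has_integral
      - integral {a powr y * t..t} g) {0..y}"
    by (simp add: algebra_simps)
  from has_integral_divide[OF this, of "ln a"] show ?thesis
    using a by simp
qed

lemma has_integral_powr_substitution_to_inf:
  fixes g :: "real \<Rightarrow> real"
  assumes a: "0 < a" "a < 1" and t: "0 < t"
    and g: "continuous_on {0<..} g" and nonneg: "\<forall>s>0. 0 \<le> g s"
    and int: "g integrable_on {0..t}"
  shows "((\<lambda>r. a powr r * t * g (a powr r * t)) has_integral integral {0..t} g / - ln a) {0..}"
proof (rule has_integral_to_inf)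
  show "(\<lambda>r. a powr r * t * g (a powr r * t)) integrable_on {0..y}" for y
    using has_integral_powr_substitution[OF a t _ g, of y] by (cases "0 \<le> y") auto
  show "0 \<le> a powr r * t * g (a powr r * t)" for r
    using a t nonneg by simp
  have lower_end: "((\<lambda>y. a powr y * t) \<longlongrightarrow> 0) at_top"
    using tendsto_mult_left_zero[OF tendsto_powr_base_less_1_at_top[OF a]] .
  have in_range: "\<forall>\<^sub>F y in at_top. a powr y * t \<in> {0..t}"
    using eventually_ge_at_top[of 0] by eventually_elim (use a t in \<open>simp add: powr_le1\<close>)
  have "((\<lambda>y. integral {a powr y * t..t} g) \<longlongrightarrow> integral {0..t} g) at_top"
    using indefinite_integral_continuous_1'[OF int] lower_end _ in_range
    by (rule continuous_on_tendsto_compose) (use t in simp)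
  then have "((\<lambda>y. integral {a powr y * t..t} g / - ln a) \<longlongrightarrow> integral {0..t} g / - ln a) at_top"
    by (intro tendsto_divide tendsto_const) (use a in auto)
  moreover have "\<forall>\<^sub>F y in at_top. integral {a powr y * t..t} g / - ln a =
      integral {0..y} (\<lambda>r. a powr r * t * g (a powr r * t))"
    using eventually_ge_at_top[of 0]
  proof eventually_elim
    case (elim y)
    show ?case
      using integral_unique[OF has_integral_powr_substitution[OF a t elim g]] by simp
  qed
  ultimately show "((\<lambda>y. integral {0..y} (\<lambda>r. a powr r * t * g (a powr r * t)))
      \<longlongrightarrow> integral {0..t} g / - ln a) at_top"
    by (rule Lim_transform_eventually)
qed

lemma powr_times_htilde_eq_integral:
  fixes h :: "real \<Rightarrow> real"
  assumes a: "0 < a" "a < 1" and h: "continuous_on {0<..} h"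
    and nonneg: "\<forall>s>0. 0 \<le> h s" and C: "\<forall>s>0. h s \<le> C"
    and \<zeta>: "\<zeta> > -1" and t: "0 < t"
  shows "t powr (\<zeta> + 1) * htilde a \<zeta> h t = integral {0..t} (\<lambda>s. s powr \<zeta> * h s)"
proof -
  define g where "g s = s powr \<zeta> * h s" for s
  have integrand: "a powr r * t * g (a powr r * t) = a powr (r * (1 + \<zeta>)) * h (a powr r * t) * t powr (\<zeta> + 1)"
    for r
  proof -
    have "(a powr r * t) powr \<zeta> = a powr (r * \<zeta>) * t powr \<zeta>"
      using a t by (simp add: powr_mult powr_powr)
    moreover have "a powr (r * (1 + \<zeta>)) = a powr r * a powr (r * \<zeta>)"
      by (simp add: distrib_left powr_add)
    moreover have "t powr (\<zeta> + 1) = t * t powr \<zeta>"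
      using t by (simp add: powr_add)
    ultimately show ?thesis
      by (simp add: g_def mult_ac)
  qed
  have "g integrable_on {0..t}"
    unfolding g_def using nonneg C t
    by (intro powr_times_bounded_integrable_from_0[OF h _ \<zeta>]) auto
  then have "((\<lambda>r. a powr r * t * g (a powr r * t)) has_integral integral {0..t} g / - ln a) {0..}"
    using nonneg unfolding g_def
    by (intro has_integral_powr_substitution_to_inf[OF a t]) (auto intro!: continuous_intros h)
  from has_integral_divide[OF this, of "t powr (\<zeta> + 1)"]
  have "((\<lambda>r. a powr (r * (1 + \<zeta>)) * h (a powr r * t) * t powr (\<zeta> + 1) / t powr (\<zeta> + 1))
      has_integral integral {0..t} g / - ln a / t powr (\<zeta> + 1)) {0..}"
    by (simp only: integrand)
  then have "((\<lambda>r. a powr (r * (1 + \<zeta>)) * h (a powr r * t)) has_integral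
      integral {0..t} g / - ln a / t powr (\<zeta> + 1)) {0..}"
    using t by simp
  then have "htilde a \<zeta> h t = - ln a * (integral {0..t} g / - ln a / t powr (\<zeta> + 1))"
    unfolding htilde_def by (simp only: integral_unique)
  also have "\<dots> = integral {0..t} g / t powr (\<zeta> + 1)"
    using a by simp
  finally show ?thesis
    using t unfolding g_def by simp
qed

lemma filterlim_integral_at_top_if_ge_inverse:
  fixes f :: "real \<Rightarrow> real"
  assumes f: "continuous_on {1..} f" and c: "0 < c" and ge: "\<forall>s\<ge>1. c / s \<le> f s"
  shows "filterlim (\<lambda>t. integral {1..t} f) at_top at_top"
proof (rule filterlim_at_top_mono)
  show "filterlim (\<lambda>t. c * ln t) at_top at_top"
    by (rule filterlim_tendsto_pos_mult_at_top[OF tendsto_const c ln_at_top])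
  have lower: "c * ln t \<le> integral {1..t} f" if t: "1 \<le> t" for t
  proof -
    have log: "((\<lambda>s. c / s) has_integral c * ln t - c * ln 1) {1..t}"
      using t by (intro fundamental_theorem_of_calculus)
        (auto intro!: derivative_eq_intros simp flip: has_real_derivative_iff_has_vector_derivative)
    have "f integrable_on {1..t}"
      using f by (intro integrable_continuous_interval) (auto elim: continuous_on_subset)
    then have "integral {1..t} (\<lambda>s. c / s) \<le> integral {1..t} f"
      using log ge by (intro integral_le) (auto simp: has_integral_integrable)
    then show ?thesis
      using integral_unique[OF log] by simp
  qed
  show "\<forall>\<^sub>F t in at_top. c * ln t \<le> integral {1..t} f"
    using eventually_ge_at_top[of 1] by eventually_elim (rule lower)
qed

lemma filterlim_integral_powr_times_at_top:
  fixes h :: "real \<Rightarrow> real"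
  assumes h: "continuous_on {1..} h" and c: "0 < c" "\<forall>s\<ge>1. c \<le> h s" and \<zeta>: "\<zeta> \<ge> -1"
  shows "filterlim (\<lambda>t. integral {1..t} (\<lambda>s. s powr \<zeta> * h s)) at_top at_top"
proof (rule filterlim_integral_at_top_if_ge_inverse[OF _ c(1)])
  show "continuous_on {1..} (\<lambda>s. s powr \<zeta> * h s)"
    using h by (intro continuous_intros) auto
  show "\<forall>s\<ge>1. c / s \<le> s powr \<zeta> * h s"
  proof (intro allI impI)
    fix s :: real
    assume s: "1 \<le> s"
    have "1 / s \<le> s powr \<zeta>"
      using powr_mono[of "-1" \<zeta> s] s \<zeta> by (simp add: powr_minus divide_inverse)
    moreover have "c \<le> h s"
      using c(2) s by simp
    ultimately have "c * (1 / s) \<le> h s * s powr \<zeta>"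
      using c(1) s by (intro mult_mono) auto
    then show "c / s \<le> s powr \<zeta> * h s"
      by (simp add: mult.commute)
  qed
qed

lemma tendsto_divide_add_const_at_top:
  fixes f :: "'a \<Rightarrow> real"
  assumes f: "filterlim f at_top F"
  shows "((\<lambda>x. f x / (K + f x)) \<longlongrightarrow> 1) F"
proof -
  have shifted: "filterlim (\<lambda>x. K + f x) at_top F"
    by (rule filterlim_tendsto_add_at_top[OF tendsto_const f])
  have "((\<lambda>x. 1 - K * inverse (K + f x)) \<longlongrightarrow> 1 - K * 0) F"
    by (intro tendsto_intros tendsto_inverse_0_at_top shifted)
  moreover have "\<forall>\<^sub>F x in F. 1 - K * inverse (K + f x) = f x / (K + f x)"
    using filterlim_at_top_dense[THEN iffD1, OF shifted, rule_format, of 0]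
    by eventually_elim (simp add: field_simps)
  ultimately show ?thesis
    by (simp add: Lim_transform_eventually)
qed

theorem lemma2p4p3:
  fixes a \<zeta> :: real and h :: "real \<Rightarrow> real"
  assumes a: "0 < a" "a < 1"
    and diff: "\<forall>t>0. h differentiable (at t)"
    and bdd: "\<exists>C. \<forall>t>0. h t \<le> C"
    and away: "\<exists>c>0. \<forall>t>0. c \<le> h t"
    and per: "\<forall>t>0. h t = h (a * t)"
    and zeta: "\<zeta> > -1"
  shows "((\<lambda>t. integral {1..t} (\<lambda>s. s powr \<zeta> * h s) / (t powr (\<zeta> + 1) * htilde a \<zeta> h t))
           \<longlongrightarrow> 1) at_top"
proof -
  obtain C where C: "\<forall>t>0. h t \<le> C" using bdd by blast
  obtain c where c: "0 < c" "\<forall>t>0. c \<le> h t" using away by blast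
  have h: "continuous_on {0<..} h"
    using diff by (intro continuous_at_imp_continuous_on) (auto intro: differentiable_imp_continuous_within)
  have nonneg: "\<forall>t>0. 0 \<le> h t"
    using c by force
  define f where "f = (\<lambda>s. s powr \<zeta> * h s)"
  define K where "K = integral {0..1} f"
  have denominator: "t powr (\<zeta> + 1) * htilde a \<zeta> h t = K + integral {1..t} f" if "1 \<le> t" for t
  proof -
    have "f integrable_on {0..t}"
      unfolding f_def using that nonneg C
      by (intro powr_times_bounded_integrable_from_0[OF h _ zeta]) auto
    then show ?thesis
      using powr_times_htilde_eq_integral[OF a h nonneg C zeta] that
      unfolding K_def f_def by (simp add: Henstock_Kurzweil_Integration.integral_combine)
  qed
  have "filterlim (\<lambda>t. integral {1..t} f) at_top at_top"
    unfolding f_def using c zeta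
    by (intro filterlim_integral_powr_times_at_top continuous_on_subset[OF h]) auto
  then have "((\<lambda>t. integral {1..t} f / (K + integral {1..t} f)) \<longlongrightarrow> 1) at_top"
    by (rule tendsto_divide_add_const_at_top)
  moreover have "\<forall>\<^sub>F t in at_top. integral {1..t} f / (K + integral {1..t} f) =
      integral {1..t} (\<lambda>s. s powr \<zeta> * h s) / (t powr (\<zeta> + 1) * htilde a \<zeta> h t)"
    using eventually_ge_at_top[of 1] by eventually_elim (simp add: denominator f_def)
  ultimately show ?thesis
    by (rule Lim_transform_eventually)
qed

end
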